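(* Let $\eta,\epsilon>0$ and let $\mu$ be a distribution over $\{-1,+1\}^n$. If $\mu$ has $(\eta,\epsilon)$-complete limited correlation, then for every integer $k\ge1$, the $k$-transformation $\mu_k=\mathrm{Rd}(\mu,k)$ has $(\eta+2,\epsilon)$-complete limited correlation.
   Context: For a distribution $\nu$ on $\{-1,+1\}^N$ ($N$ finite index set): $\Omega(\nu)$ support, $\nu_\Lambda$ marginal, $\nu^\sigma$ conditional given $\sigma\in\Omega(\nu_\Lambda)$, $\nu^{i\gets x}$ conditioned on coordinate $i$ equal $x$. $(\boldsymbol\lambda*\nu)(\sigma)\propto\nu(\sigma)\prod_{i:\sigma_i=+1}\lambda_i$. Correlation: $\Psi^{\mathrm{Cor}}_\nu(i,i)=\nu_i(-1)$; for $i\ne j$, $\Psi^{\mathrm{Cor}}_\nu(i,j)=\nu_j^{i\gets+1}(+1)-\nu_j(+1)$ if $+1\in\Omega(\nu_i)$, else $0$; $\Psi^{\mathrm{AbsCor}}_\nu=|\Psi^{\mathrm{Cor}}_\nu|$ entrywise. $\nu$ has $\eta$-limited correlation if the spectral radius of $\Psi^{\mathrm{AbsCor}}_{\nu^\sigma}$ is $\le\eta$ for all $\Lambda\subseteq N$ and $\sigma\in\Omega(\nu_\Lambda)$; $(\eta,\epsilon)$-complete limited correlation if $(\boldsymbol\lambda*\nu)$ has $\eta$-limited correlation for all $\boldsymbol\lambda\in(0,1+\epsilon]^N$. $k$-transformation: $\mathrm{Rd}(\mu,k)$ is the law of $Y\in\{-1,+1\}^{[n]\times[k]}$ from $X\sim\mu$: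 if $X_i=-1$, $Y_{(i,j)}=-1$ for all $j$; if $X_i=+1$, $Y_{(i,j^* )}=+1$ and others $-1$, with $j^*$ uniform in $[k]$ independently. *)

theory Defs
  imports "HOL-Analysis.Analysis" "HOL-Library.FuncSet"
begin

definition cube :: "'i set \<Rightarrow> ('i \<Rightarrow> int) set" where
  "cube N = PiE N (\<lambda>_. {-1, 1})"

definition is_dist :: "'i set \<Rightarrow> (('i \<Rightarrow> int) \<Rightarrow> real) \<Rightarrow> bool" where
  "is_dist N nu \<longleftrightarrow> (\<forall>\<sigma>\<in>cube N. 0 \<le> nu \<sigma>) \<and> (\<Sum>\<sigma>\<in>cube N. nu \<sigma>) = 1"

definition prob_ev :: "'i set \<Rightarrow> (('i \<Rightarrow> int) \<Rightarrow> real) \<Rightarrow> (('i \<Rightarrow> int) \<Rightarrow> bool) \<Rightarrow> real" where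
  "prob_ev N nu P = (\<Sum>\<sigma>\<in>{\<sigma>\<in>cube N. P \<sigma>}. nu \<sigma>)"

definition marginal :: "'i set \<Rightarrow> (('i \<Rightarrow> int) \<Rightarrow> real) \<Rightarrow> 'i set \<Rightarrow> ('i \<Rightarrow> int) \<Rightarrow> real" where
  "marginal N nu \<Lambda> \<tau> = prob_ev N nu (\<lambda>\<sigma>. \<forall>i\<in>\<Lambda>. \<sigma> i = \<tau> i)"

definition support_marg :: "'i set \<Rightarrow> (('i \<Rightarrow> int) \<Rightarrow> real) \<Rightarrow> 'i set \<Rightarrow> ('i \<Rightarrow> int) set" where
  "support_marg N nu \<Lambda> = {\<tau> \<in> cube \<Lambda>. 0 < marginal N nu \<Lambda> \<tau>}"

definition cond :: "'i set \<Rightarrow> (('i \<Rightarrow> int) \<Rightarrow> real) \<Rightarrow> 'i set \<Rightarrow> ('i \<Rightarrow> int) \<Rightarrow> (('i \<Rightarrow> int) \<Rightarrow> real)" where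
  "cond N nu \<Lambda> \<tau> = (\<lambda>\<rho>. nu (\<lambda>i. if i \<in> \<Lambda> then \<tau> i else \<rho> i) / marginal N nu \<Lambda> \<tau>)"

definition pin :: "'i \<Rightarrow> int \<Rightarrow> ('i \<Rightarrow> int)" where
  "pin i x = restrict (\<lambda>_. x) {i}"

definition psi_cor :: "'i set \<Rightarrow> (('i \<Rightarrow> int) \<Rightarrow> real) \<Rightarrow> 'i \<Rightarrow> 'i \<Rightarrow> real" where
  "psi_cor N nu i j =
     (if i = j then marginal N nu {i} (pin i (-1))
      else if pin i 1 \<in> support_marg N nu {i}
      then marginal (N - {i}) (cond N nu {i} (pin i 1)) {j} (pin j 1)
           - marginal N nu {j} (pin j 1)
      else 0)"

definition psi_abscor :: "'i set \<Rightarrow> (('i \<Rightarrow> int) \<Rightarrow> real) \<Rightarrow> 'i \<Rightarrow> 'i \<Rightarrow> real" where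
  "psi_abscor N nu i j = \<bar>psi_cor N nu i j\<bar>"

definition is_eigenvalue :: "'i set \<Rightarrow> ('i \<Rightarrow> 'i \<Rightarrow> real) \<Rightarrow> complex \<Rightarrow> bool" where
  "is_eigenvalue I A c \<longleftrightarrow>
     (\<exists>v :: 'i \<Rightarrow> complex. (\<exists>i\<in>I. v i \<noteq> 0) \<and>
        (\<forall>i\<in>I. (\<Sum>j\<in>I. complex_of_real (A i j) * v j) = c * v i))"

definition spec_radius :: "'i set \<Rightarrow> ('i \<Rightarrow> 'i \<Rightarrow> real) \<Rightarrow> real" where
  "spec_radius I A = (if I = {} then 0 else Sup (cmod ` {c. is_eigenvalue I A c}))"

definition limited_corr :: "'i set \<Rightarrow> (('i \<Rightarrow> int) \<Rightarrow> real) \<Rightarrow> real \<Rightarrow> bool" where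
  "limited_corr N nu \<eta> \<longleftrightarrow>
     (\<forall>\<Lambda>. \<Lambda> \<subseteq> N \<longrightarrow> (\<forall>\<tau>\<in>support_marg N nu \<Lambda>.
        spec_radius (N - \<Lambda>) (psi_abscor (N - \<Lambda>) (cond N nu \<Lambda> \<tau>)) \<le> \<eta>))"

definition tilt :: "'i set \<Rightarrow> ('i \<Rightarrow> real) \<Rightarrow> (('i \<Rightarrow> int) \<Rightarrow> real) \<Rightarrow> (('i \<Rightarrow> int) \<Rightarrow> real)" where
  "tilt N lam nu = (\<lambda>\<sigma>. nu \<sigma> * (\<Prod>i\<in>{i\<in>N. \<sigma> i = 1}. lam i) /
      (\<Sum>\<sigma>'\<in>cube N. nu \<sigma>' * (\<Prod>i\<in>{i\<in>N. \<sigma>' i = 1}. lam i)))"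

definition complete_limited_corr :: "'i set \<Rightarrow> (('i \<Rightarrow> int) \<Rightarrow> real) \<Rightarrow> real \<Rightarrow> real \<Rightarrow> bool" where
  "complete_limited_corr N nu \<eta> \<epsilon> \<longleftrightarrow>
     (\<forall>lam. (\<forall>i\<in>N. 0 < lam i \<and> lam i \<le> 1 + \<epsilon>) \<longrightarrow> limited_corr N (tilt N lam nu) \<eta>)"

definition Rd :: "'i set \<Rightarrow> nat \<Rightarrow> (('i \<Rightarrow> int) \<Rightarrow> real) \<Rightarrow> (('i \<times> nat \<Rightarrow> int) \<Rightarrow> real)" where
  "Rd N k mu = (\<lambda>Y. \<Sum>X\<in>cube N. mu X *
      (\<Prod>i\<in>N. if X i = -1
               then (if \<forall>j\<in>{1..k}. Y (i, j) = -1 then 1 else 0)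
               else (if card {j\<in>{1..k}. Y (i, j) = 1} = 1 then 1 / real k else 0)))"

end

theory Submission
  imports Defs "Jordan_Normal_Form.Spectral_Radius"
begin

text \<open>
  Fix a field \<lambda> on the sites N \<times> [k] of Rd(\<mu>, k) and a pinning \<tau> of a set \<Lambda> of sites, and
  let \<nu> be the conditional distribution of the remaining sites. Call a block i decided when \<tau>
  already determines the original spin X i. Under \<nu> the free sites of a decided block are -1,
  so they only contribute unit rows to the correlation matrix. The free sites of an undecided
  block i carry a single +1 exactly when X i = +1 under the distribution \<mu>' obtained from \<mu> by
  the averaged field \<lambda>' i = (1/k) \<Sum>j \<lambda> (i, j) \<le> 1 + \<epsilon> and pinning of the decided blocks; this +1
  sits at site j with probability q i j (share i j) proportional to \<lambda> (i, j), independently of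
  the rest.
  Hence |\<Psi>\<nu> ((i, j), (i', j'))| \<le> q i' j' |\<Psi>\<mu>' (i, i')| + [i = i'] ([j = j'] + q i j'). For an
  eigenvector x of the absolute correlation matrix of \<nu> with eigenvalue c, the block masses
  z i = \<Sum>j q i j |x (i, j)| thus satisfy (|c| - 2) z \<le> |\<Psi>\<mu>'| z componentwise, and the
  Collatz--Wielandt bound gives |c| - 2 \<le> \<eta>.
\<close>

section \<open>Spectral radius and the Collatz--Wielandt bound\<close>

definition mat_apply :: "'i set \<Rightarrow> ('i \<Rightarrow> 'i \<Rightarrow> real) \<Rightarrow> ('i \<Rightarrow> real) \<Rightarrow> 'i \<Rightarrow> real" where
  "mat_apply I B u = (\<lambda>i. \<Sum>j\<in>I. B i j * u j)"

lemma is_eigenvalue_norm_le_abs_sum: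
  assumes fin: "finite I" and ev: "is_eigenvalue I B c"
  shows "cmod c \<le> (\<Sum>i\<in>I. \<Sum>j\<in>I. \<bar>B i j\<bar>)"
proof -
  from ev obtain v where nz: "\<exists>i\<in>I. v i \<noteq> 0"
    and eq: "\<And>i. i \<in> I \<Longrightarrow> (\<Sum>j\<in>I. complex_of_real (B i j) * v j) = c * v i"
    unfolding is_eigenvalue_def by blast
  have "Max ((\<lambda>j. cmod (v j)) ` I) \<in> (\<lambda>j. cmod (v j)) ` I"
    using fin nz by (intro Max_in) auto
  then obtain i0 where i0: "i0 \<in> I" and i0_max: "Max ((\<lambda>j. cmod (v j)) ` I) = cmod (v i0)"
    by blast
  have max: "cmod (v j) \<le> cmod (v i0)" if "j \<in> I" for j
    unfolding i0_max[symmetric] using fin that by (intro Max_ge) auto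
  have pos: "0 < cmod (v i0)"
    using nz max by (auto intro: order.strict_trans2)
  have "cmod c * cmod (v i0) = cmod (\<Sum>j\<in>I. complex_of_real (B i0 j) * v j)"
    using eq[OF i0] by (simp add: norm_mult)
  also have "\<dots> \<le> (\<Sum>j\<in>I. \<bar>B i0 j\<bar> * cmod (v i0))"
    by (rule order.trans[OF norm_sum sum_mono]) (auto simp: norm_mult intro!: mult_left_mono max)
  also have "\<dots> = (\<Sum>j\<in>I. \<bar>B i0 j\<bar>) * cmod (v i0)"
    by (simp add: sum_distrib_right)
  finally have "cmod c \<le> (\<Sum>j\<in>I. \<bar>B i0 j\<bar>)"
    using pos by simp
  also have "\<dots> \<le> (\<Sum>i\<in>I. \<Sum>j\<in>I. \<bar>B i j\<bar>)"
    using i0 fin by (intro member_le_sum) (auto intro: sum_nonneg)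
  finally show ?thesis .
qed

lemma is_eigenvalue_norm_le_spec_radius:
  assumes fin: "finite I" and ev: "is_eigenvalue I B c"
  shows "cmod c \<le> spec_radius I B"
proof -
  have "I \<noteq> {}"
    using ev unfolding is_eigenvalue_def by auto
  moreover have "bdd_above (cmod ` {c. is_eigenvalue I B c})"
    using is_eigenvalue_norm_le_abs_sum[OF fin]
    by (auto intro!: bdd_aboveI[where M = "\<Sum>i\<in>I. \<Sum>j\<in>I. \<bar>B i j\<bar>"])
  ultimately show ?thesis
    unfolding spec_radius_def using ev by (auto intro: cSup_upper)
qed

lemma is_eigenvalue_divide:
  assumes ev: "is_eigenvalue I (\<lambda>i j. B i j / t) e" and t: "t \<noteq> 0"
  shows "is_eigenvalue I B (complex_of_real t * e)"
proof -
  from ev obtain v where nz: "\<exists>i\<in>I. v i \<noteq> 0"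
    and eq: "\<And>i. i \<in> I \<Longrightarrow> (\<Sum>j\<in>I. complex_of_real (B i j / t) * v j) = e * v i"
    unfolding is_eigenvalue_def by blast
  have "(\<Sum>j\<in>I. complex_of_real (B i j) * v j) = complex_of_real t * e * v i" if "i \<in> I" for i
  proof -
    have "(\<Sum>j\<in>I. complex_of_real (B i j) * v j)
        = complex_of_real t * (\<Sum>j\<in>I. complex_of_real (B i j / t) * v j)"
      using t by (simp add: sum_distrib_left field_simps)
    then show ?thesis
      using eq[OF that] by simp
  qed
  then show ?thesis
    unfolding is_eigenvalue_def using nz by blast
qed

definition cmat_of :: "nat \<Rightarrow> (nat \<Rightarrow> 'i) \<Rightarrow> ('i \<Rightarrow> 'i \<Rightarrow> real) \<Rightarrow> complex mat" where
  "cmat_of n f B = mat n n (\<lambda>(a, b). complex_of_real (B (f a) (f b)))"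

lemma cmat_of_carrier [simp]: "cmat_of n f B \<in> carrier_mat n n"
  by (simp add: cmat_of_def)

lemma cmat_of_dim [simp]: "dim_row (cmat_of n f B) = n" "dim_col (cmat_of n f B) = n"
  by (simp_all add: cmat_of_def)

lemma is_eigenvalue_if_eigenvalue_cmat_of:
  assumes f: "bij_betw f {0..<n} I" and ev: "eigenvalue (cmat_of n f B) e"
  shows "is_eigenvalue I B e"
proof -
  let ?g = "inv_into {0..<n} f"
  from ev obtain v where v: "v \<in> carrier_vec n" "v \<noteq> 0\<^sub>v n" "cmat_of n f B *\<^sub>v v = e \<cdot>\<^sub>v v"
    unfolding eigenvalue_def eigenvector_def by auto
  from v(1,2) obtain a where a: "a < n" "v $ a \<noteq> 0"
    by (metis carrier_vecD eq_vecI index_zero_vec(1) index_zero_vec(2))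
  have gf: "\<And>a. a < n \<Longrightarrow> ?g (f a) = a"
    using f by (simp add: bij_betw_def)
  have fg: "\<And>i. i \<in> I \<Longrightarrow> f (?g i) = i" "\<And>i. i \<in> I \<Longrightarrow> ?g i < n"
    using f by (auto simp: bij_betw_def f_inv_into_f inv_into_into)
  have eig: "(\<Sum>j\<in>I. complex_of_real (B i j) * v $ ?g j) = e * v $ ?g i" if i: "i \<in> I" for i
  proof -
    have "(\<Sum>j\<in>I. complex_of_real (B i j) * v $ ?g j)
        = (\<Sum>b\<in>{0..<n}. complex_of_real (B i (f b)) * v $ ?g (f b))"
      by (rule sum.reindex_bij_betw[OF f, symmetric])
    also have "\<dots> = (\<Sum>b\<in>{0..<n}. cmat_of n f B $$ (?g i, b) * v $ b)"
      using gf fg i by (intro sum.cong) (simp_all add: cmat_of_def)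
    also have "\<dots> = (cmat_of n f B *\<^sub>v v) $ ?g i"
      using fg i v(1) by (simp add: scalar_prod_def row_def)
    finally show ?thesis
      using v(1,3) fg i by simp
  qed
  have "f a \<in> I" "v $ ?g (f a) \<noteq> 0"
    using a bij_betw_apply[OF f] gf by simp_all
  then show ?thesis
    unfolding is_eigenvalue_def by (intro exI[of _ "\<lambda>i. v $ ?g i"]) (use eig in blast)
qed

lemma is_eigenvalue_exists:
  assumes "finite I" and "I \<noteq> {}"
  shows "\<exists>c. is_eigenvalue I B c"
proof -
  obtain f where f: "bij_betw f {0..<card I} I"
    using ex_bij_betw_nat_finite[OF assms(1)] by blast
  have "card I > 0"
    using assms by auto
  from spectrum_non_empty[OF cmat_of_carrier this] obtain e where "eigenvalue (cmat_of (card I) f B) e"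
    unfolding spectrum_def by auto
  then show ?thesis
    using is_eigenvalue_if_eigenvalue_cmat_of[OF f] by blast
qed

lemma spec_radius_nonneg:
  assumes "finite I"
  shows "0 \<le> spec_radius I B"
proof (cases "I = {}")
  case False
  then obtain c where "is_eigenvalue I B c"
    using is_eigenvalue_exists[OF assms] by blast
  then show ?thesis
    using is_eigenvalue_norm_le_spec_radius[OF assms] norm_ge_zero order.trans by blast
qed (simp add: spec_radius_def)

lemma spec_radius_le:
  assumes "finite I" and "\<And>c. is_eigenvalue I B c \<Longrightarrow> cmod c \<le> r" and "0 \<le> r"
  shows "spec_radius I B \<le> r"
proof (cases "I = {}")
  case False
  then obtain c where "is_eigenvalue I B c"
    using is_eigenvalue_exists[OF assms(1)] by blast
  then show ?thesis
    unfolding spec_radius_def using False assms(2) by (auto intro!: cSup_least)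
qed (use assms(3) in \<open>simp add: spec_radius_def\<close>)

lemma cmat_of_power_mult_vec:
  assumes f: "bij_betw f {0..<n} I"
  shows "cmat_of n f B ^\<^sub>m k *\<^sub>v vec n (\<lambda>a. complex_of_real (u (f a)))
       = vec n (\<lambda>a. complex_of_real ((mat_apply I B ^^ k) u (f a)))"
proof (induction k arbitrary: u)
  case (Suc k)
  let ?A = "cmat_of n f B"
  have step: "?A *\<^sub>v vec n (\<lambda>a. complex_of_real (u (f a)))
      = vec n (\<lambda>a. complex_of_real (mat_apply I B u (f a)))" for u
  proof (rule eq_vecI)
    fix a assume "a < dim_vec (vec n (\<lambda>a. complex_of_real (mat_apply I B u (f a))))"
    then show "(?A *\<^sub>v vec n (\<lambda>a. complex_of_real (u (f a)))) $ a
        = vec n (\<lambda>a. complex_of_real (mat_apply I B u (f a))) $ a"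
      using sum.reindex_bij_betw[OF f, of "\<lambda>j. complex_of_real (B (f a) j) * complex_of_real (u j)"]
      by (simp add: cmat_of_def scalar_prod_def mat_apply_def)
  qed (simp add: cmat_of_def)
  have "?A ^\<^sub>m Suc k *\<^sub>v vec n (\<lambda>a. complex_of_real (u (f a)))
      = ?A ^\<^sub>m k *\<^sub>v (?A *\<^sub>v vec n (\<lambda>a. complex_of_real (u (f a))))"
    by (simp del: assoc_mult_mat_vec add: assoc_mult_mat_vec[of _ n n _ n])
  also have "\<dots> = vec n (\<lambda>a. complex_of_real ((mat_apply I B ^^ k) (mat_apply I B u) (f a)))"
    unfolding step by (rule Suc.IH)
  finally show ?case
    by (simp add: funpow_Suc_right del: funpow.simps)
qed simp

lemma spectral_radius_cmat_of_le:
  assumes f: "bij_betw f {0..<n} I" and "0 < n"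
  shows "spectral_radius (cmat_of n f B) \<le> spec_radius I B"
proof -
  from spectral_radius_mem_max(1)[OF cmat_of_carrier \<open>0 < n\<close>] obtain e
    where e: "eigenvalue (cmat_of n f B) e" and "spectral_radius (cmat_of n f B) = cmod e"
    unfolding spectrum_def by auto
  moreover have "finite I"
    using f bij_betw_finite by blast
  ultimately show ?thesis
    using is_eigenvalue_norm_le_spec_radius is_eigenvalue_if_eigenvalue_cmat_of[OF f e] by simp
qed

text \<open>Via the Jordan normal form, a spectral radius below 1 bounds all powers of the matrix.\<close>

lemma mat_apply_iterates_bounded:
  assumes fin: "finite I" and sr: "spec_radius I B < 1"
  shows "\<exists>C. \<forall>k. \<forall>i\<in>I. \<bar>(mat_apply I B ^^ k) u i\<bar> \<le> C"
proof (cases "I = {}")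
  case False
  define n where "n = card I"
  obtain f where f: "bij_betw f {0..<n} I"
    using ex_bij_betw_nat_finite[OF fin] unfolding n_def by blast
  let ?A = "cmat_of n f B"
  have "0 < n"
    using fin False unfolding n_def by auto
  with spectral_radius_cmat_of_le[OF f] sr have "spectral_radius ?A < 1"
    by (meson order.strict_trans1)
  from spectral_radius_jnf_norm_bound_less_1_upper_triangular[OF cmat_of_carrier this]
  obtain C where C: "\<And>k. norm_bound (?A ^\<^sub>m k) C"
    by blast
  have "\<bar>(mat_apply I B ^^ k) u i\<bar> \<le> C * (\<Sum>b<n. \<bar>u (f b)\<bar>)" if i: "i \<in> I" for k i
  proof -
    define a where "a = inv_into {0..<n} f i"
    have a: "a < n" "f a = i"
      using f i unfolding a_def by (auto simp: bij_betw_def f_inv_into_f inv_into_into)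
    have "complex_of_real ((mat_apply I B ^^ k) u i)
        = (?A ^\<^sub>m k *\<^sub>v vec n (\<lambda>a. complex_of_real (u (f a)))) $ a"
      unfolding cmat_of_power_mult_vec[OF f] using a by simp
    also have "\<dots> = (\<Sum>b<n. (?A ^\<^sub>m k) $$ (a, b) * complex_of_real (u (f b)))"
      using a cmat_of_carrier[of n f B] by (simp add: scalar_prod_def atLeast0LessThan)
    finally have "\<bar>(mat_apply I B ^^ k) u i\<bar>
        = cmod (\<Sum>b<n. (?A ^\<^sub>m k) $$ (a, b) * complex_of_real (u (f b)))"
      by (metis norm_of_real)
    also have "\<dots> \<le> (\<Sum>b<n. C * \<bar>u (f b)\<bar>)"
      using C[of k] a unfolding norm_bound_def
      by (intro order.trans[OF norm_sum sum_mono]) (auto simp: norm_mult intro!: mult_right_mono)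
    finally show ?thesis
      by (simp add: sum_distrib_left)
  qed
  then show ?thesis
    by blast
qed simp

lemma mat_apply_iterates_ge:
  assumes B: "\<And>i j. i \<in> I \<Longrightarrow> j \<in> I \<Longrightarrow> 0 \<le> B i j" and r: "0 \<le> r"
    and sub: "\<And>i. i \<in> I \<Longrightarrow> r * z i \<le> mat_apply I B z i"
  shows "i \<in> I \<Longrightarrow> r ^ k * z i \<le> (mat_apply I B ^^ k) z i"
proof (induction k arbitrary: i)
  case (Suc k)
  have "r ^ Suc k * z i = r ^ k * (r * z i)"
    by (simp add: ac_simps)
  also have "\<dots> \<le> r ^ k * mat_apply I B z i"
    using sub[OF Suc.prems] r by (intro mult_left_mono) auto
  also have "\<dots> = (\<Sum>j\<in>I. B i j * (r ^ k * z j))"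
    by (simp add: mat_apply_def sum_distrib_left ac_simps)
  also have "\<dots> \<le> (\<Sum>j\<in>I. B i j * (mat_apply I B ^^ k) z j)"
    using Suc.IH B Suc.prems by (intro sum_mono mult_left_mono) auto
  also have "\<dots> = (mat_apply I B ^^ Suc k) z i"
    by (simp only: funpow.simps comp_apply mat_apply_def[of I B "(mat_apply I B ^^ k) z"])
  finally show ?case .
qed simp

lemma spec_radius_divide_le:
  assumes fin: "finite I" and t: "0 < t"
  shows "spec_radius I (\<lambda>i j. B i j / t) \<le> spec_radius I B / t"
proof (rule spec_radius_le[OF fin])
  fix e assume "is_eigenvalue I (\<lambda>i j. B i j / t) e"
  then have "cmod (complex_of_real t * e) \<le> spec_radius I B"
    using is_eigenvalue_divide t by (intro is_eigenvalue_norm_le_spec_radius[OF fin]) auto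
  then show "cmod e \<le> spec_radius I B / t"
    using t by (simp add: norm_mult field_simps)
qed (use spec_radius_nonneg[OF fin] t in simp)

text \<open>If the spectral radius were below s, the iterates of B / t, for t strictly between the
  two, would stay bounded and yet grow like (s / t) ^ k at i0.\<close>

lemma spec_radius_ge_subinvariant:
  assumes fin: "finite I" and B: "\<And>i j. i \<in> I \<Longrightarrow> j \<in> I \<Longrightarrow> 0 \<le> B i j"
    and i0: "i0 \<in> I" "0 < z i0" and s: "0 < s"
    and sub: "\<And>i. i \<in> I \<Longrightarrow> s * z i \<le> mat_apply I B z i"
  shows "s \<le> spec_radius I B"
proof (rule ccontr)
  assume lt: "\<not> ?thesis"
  define t where "t = (spec_radius I B + s) / 2"
  have t: "0 < t" "spec_radius I B < t" "t < s"
    using lt spec_radius_nonneg[OF fin, of B] unfolding t_def by auto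
  define B' where "B' = (\<lambda>i j. B i j / t)"
  have "spec_radius I B' \<le> spec_radius I B / t"
    unfolding B'_def using fin t(1) by (rule spec_radius_divide_le)
  also have "spec_radius I B / t < 1"
    using t by simp
  finally have "spec_radius I B' < 1" .
  then obtain C where C: "\<And>k. \<bar>(mat_apply I B' ^^ k) z i0\<bar> \<le> C"
    using mat_apply_iterates_bounded[OF fin] i0(1) by blast
  have grow: "(s / t) ^ k * z i0 \<le> (mat_apply I B' ^^ k) z i0" for k
  proof (rule mat_apply_iterates_ge[OF _ _ _ i0(1)])
    have "mat_apply I B' z i = mat_apply I B z i / t" for i
      by (simp add: B'_def mat_apply_def sum_divide_distrib)
    then show "s / t * z i \<le> mat_apply I B' z i" if "i \<in> I" for i
      using sub[OF that] t(1) by (simp add: divide_right_mono)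
  qed (use B t s in \<open>auto simp: B'_def\<close>)
  obtain k where "C / z i0 < (s / t) ^ k"
    using real_arch_pow[of "s / t" "C / z i0"] t by auto
  then have "C < (s / t) ^ k * z i0"
    using i0(2) by (simp add: field_simps)
  then show False
    using grow[of k] C[of k] by linarith
qed

section \<open>Events of tilted and conditioned distributions\<close>

lemma cube_value: "\<sigma> \<in> cube N \<Longrightarrow> i \<in> N \<Longrightarrow> \<sigma> i = -1 \<or> \<sigma> i = 1"
  unfolding cube_def by auto

lemma cube_undefined: "\<sigma> \<in> cube N \<Longrightarrow> i \<notin> N \<Longrightarrow> \<sigma> i = undefined"
  unfolding cube_def by (auto simp: PiE_def extensional_def)

lemma finite_cube: "finite N \<Longrightarrow> finite (cube N)"
  unfolding cube_def by (intro finite_PiE) auto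

lemma sum_cube_extend:
  assumes L: "\<Lambda> \<subseteq> M" and \<tau>: "\<tau> \<in> cube \<Lambda>"
  shows "(\<Sum>\<rho>\<in>cube (M - \<Lambda>). g (\<lambda>i. if i \<in> \<Lambda> then \<tau> i else \<rho> i))
       = (\<Sum>\<sigma>\<in>{\<sigma>\<in>cube M. \<forall>i\<in>\<Lambda>. \<sigma> i = \<tau> i}. g \<sigma>)"
proof (rule sum.reindex_bij_witness[of _ "\<lambda>\<sigma>. restrict \<sigma> (M - \<Lambda>)" "\<lambda>\<rho> i. if i \<in> \<Lambda> then \<tau> i else \<rho> i"])
  fix \<rho> assume "\<rho> \<in> cube (M - \<Lambda>)"
  then show "restrict (\<lambda>i. if i \<in> \<Lambda> then \<tau> i else \<rho> i) (M - \<Lambda>) = \<rho>"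
    and "(\<lambda>i. if i \<in> \<Lambda> then \<tau> i else \<rho> i) \<in> {\<sigma>\<in>cube M. \<forall>i\<in>\<Lambda>. \<sigma> i = \<tau> i}"
    using \<tau> L by (auto simp: restrict_def cube_def PiE_def extensional_def Pi_def)
next
  fix \<sigma> assume "\<sigma> \<in> {\<sigma>\<in>cube M. \<forall>i\<in>\<Lambda>. \<sigma> i = \<tau> i}"
  then show "(\<lambda>i. if i \<in> \<Lambda> then \<tau> i else restrict \<sigma> (M - \<Lambda>) i) = \<sigma>"
    and "restrict \<sigma> (M - \<Lambda>) \<in> cube (M - \<Lambda>)"
    using L by (auto simp: restrict_def cube_def PiE_def extensional_def Pi_def)
qed simp

lemma prob_ev_cond:
  assumes fin: "finite M" and L: "\<Lambda> \<subseteq> M" and \<tau>: "\<tau> \<in> cube \<Lambda>"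
    and P: "\<And>\<rho>. P (\<lambda>i. if i \<in> \<Lambda> then \<tau> i else \<rho> i) = P \<rho>"
  shows "prob_ev (M - \<Lambda>) (cond M w \<Lambda> \<tau>) P
       = prob_ev M w (\<lambda>\<sigma>. (\<forall>i\<in>\<Lambda>. \<sigma> i = \<tau> i) \<and> P \<sigma>) / marginal M w \<Lambda> \<tau>"
proof -
  let ?extend = "\<lambda>\<rho> i. if i \<in> \<Lambda> then \<tau> i else \<rho> i"
  let ?wP = "\<lambda>\<sigma>. if P \<sigma> then w \<sigma> else 0"
  have "prob_ev (M - \<Lambda>) (cond M w \<Lambda> \<tau>) P
      = (\<Sum>\<rho>\<in>cube (M - \<Lambda>). if P \<rho> then w (?extend \<rho>) / marginal M w \<Lambda> \<tau> else 0)"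
    unfolding prob_ev_def cond_def using fin by (simp add: sum.inter_filter finite_cube)
  also have "\<dots> = (\<Sum>\<rho>\<in>cube (M - \<Lambda>). ?wP (?extend \<rho>)) / marginal M w \<Lambda> \<tau>"
    unfolding sum_divide_distrib using P by (intro sum.cong) auto
  also have "(\<Sum>\<rho>\<in>cube (M - \<Lambda>). ?wP (?extend \<rho>)) = (\<Sum>\<sigma>\<in>{\<sigma>\<in>cube M. \<forall>i\<in>\<Lambda>. \<sigma> i = \<tau> i}. ?wP \<sigma>)"
    by (rule sum_cube_extend[OF L \<tau>])
  also have "\<dots> = prob_ev M w (\<lambda>\<sigma>. (\<forall>i\<in>\<Lambda>. \<sigma> i = \<tau> i) \<and> P \<sigma>)"
    unfolding prob_ev_def using fin by (simp add: sum.inter_filter finite_cube) (intro sum.cong; auto)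
  finally show ?thesis .
qed

lemma marginal_pin: "marginal M w {a} (pin a x) = prob_ev M w (\<lambda>\<sigma>. \<sigma> a = x)"
  unfolding marginal_def pin_def by simp

lemma pin_in_cube_iff: "pin a x \<in> cube {a} \<longleftrightarrow> x = -1 \<or> x = 1"
  unfolding pin_def cube_def by auto

lemma psi_cor_diag: "psi_cor M w a a = prob_ev M w (\<lambda>\<sigma>. \<sigma> a = -1)"
  unfolding psi_cor_def by (simp add: marginal_pin)

lemma psi_cor_offdiag:
  assumes "finite M" and "a \<in> M" and "b \<in> M" and "a \<noteq> b"
  shows "psi_cor M w a b = (if 0 < prob_ev M w (\<lambda>\<sigma>. \<sigma> a = 1)
     then prob_ev M w (\<lambda>\<sigma>. \<sigma> a = 1 \<and> \<sigma> b = 1) / prob_ev M w (\<lambda>\<sigma>. \<sigma> a = 1)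
          - prob_ev M w (\<lambda>\<sigma>. \<sigma> b = 1)
     else 0)"
proof -
  have supp: "pin a 1 \<in> support_marg M w {a} \<longleftrightarrow> 0 < prob_ev M w (\<lambda>\<sigma>. \<sigma> a = 1)"
    unfolding support_marg_def using pin_in_cube_iff[of a 1] by (simp add: marginal_pin)
  have "marginal (M - {a}) (cond M w {a} (pin a 1)) {b} (pin b 1)
      = prob_ev M w (\<lambda>\<sigma>. (\<forall>i\<in>{a}. \<sigma> i = pin a 1 i) \<and> \<sigma> b = 1) / marginal M w {a} (pin a 1)"
    unfolding marginal_pin[of "M - {a}"] using assms by (intro prob_ev_cond) (auto simp: pin_in_cube_iff)
  also have "\<dots> = prob_ev M w (\<lambda>\<sigma>. \<sigma> a = 1 \<and> \<sigma> b = 1) / prob_ev M w (\<lambda>\<sigma>. \<sigma> a = 1)"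
    unfolding marginal_pin by (simp add: pin_def)
  finally show ?thesis
    unfolding psi_cor_def using assms(4) supp by (simp add: marginal_pin)
qed

lemma prob_ev_minus_one:
  assumes "finite M" and "a \<in> M"
  shows "prob_ev M w (\<lambda>\<sigma>. \<sigma> a = -1) = prob_ev M w (\<lambda>\<sigma>. True) - prob_ev M w (\<lambda>\<sigma>. \<sigma> a = 1)"
proof -
  have "prob_ev M w (\<lambda>\<sigma>. True)
      = (\<Sum>\<sigma>\<in>cube M. (if \<sigma> a = -1 then w \<sigma> else 0) + (if \<sigma> a = 1 then w \<sigma> else 0))"
    unfolding prob_ev_def using cube_value[OF _ assms(2)] by (intro sum.cong) auto
  also have "\<dots> = prob_ev M w (\<lambda>\<sigma>. \<sigma> a = -1) + prob_ev M w (\<lambda>\<sigma>. \<sigma> a = 1)"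
    unfolding prob_ev_def sum.distrib using assms(1) by (simp add: sum.inter_filter finite_cube)
  finally show ?thesis
    by simp
qed

definition field_weight :: "'i set \<Rightarrow> ('i \<Rightarrow> real) \<Rightarrow> (('i \<Rightarrow> int) \<Rightarrow> real) \<Rightarrow> ('i \<Rightarrow> int) \<Rightarrow> real" where
  "field_weight M lam w \<sigma> = w \<sigma> * (\<Prod>i\<in>{i\<in>M. \<sigma> i = 1}. lam i)"

lemma prob_ev_tilt:
  "prob_ev M (tilt M lam w) P
     = prob_ev M (field_weight M lam w) P / (\<Sum>\<sigma>\<in>cube M. field_weight M lam w \<sigma>)"
  unfolding prob_ev_def tilt_def field_weight_def by (simp add: sum_divide_distrib)

lemma prob_ev_cond_tilt:
  assumes "finite M" and "\<Lambda> \<subseteq> M" and "\<tau> \<in> cube \<Lambda>"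
    and "\<And>\<rho>. P (\<lambda>i. if i \<in> \<Lambda> then \<tau> i else \<rho> i) = P \<rho>"
    and pos: "0 < marginal M (tilt M lam w) \<Lambda> \<tau>"
  shows "prob_ev (M - \<Lambda>) (cond M (tilt M lam w) \<Lambda> \<tau>) P
      = prob_ev M (field_weight M lam w) (\<lambda>\<sigma>. (\<forall>i\<in>\<Lambda>. \<sigma> i = \<tau> i) \<and> P \<sigma>)
        / prob_ev M (field_weight M lam w) (\<lambda>\<sigma>. \<forall>i\<in>\<Lambda>. \<sigma> i = \<tau> i)"
proof -
  have "(\<Sum>\<sigma>\<in>cube M. field_weight M lam w \<sigma>) \<noteq> 0"
    using pos unfolding marginal_def prob_ev_tilt by auto
  then show ?thesis
    unfolding prob_ev_cond[where P = P, OF assms(1-4)] marginal_def prob_ev_tilt by simp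
qed

lemma prod_indicator:
  "finite A \<Longrightarrow> (\<Prod>a\<in>A. if P a then 1 else 0) = (if \<forall>a\<in>A. P a then 1 else (0::real))"
  by (induction A rule: finite_induct) auto

definition pinned_factor ::
    "('i \<Rightarrow> real) \<Rightarrow> 'i set \<Rightarrow> ('i \<Rightarrow> int) \<Rightarrow> 'i set \<Rightarrow> 'i \<Rightarrow> int \<Rightarrow> real" where
  "pinned_factor l L t S i v =
     (if v = 1 then l i else 1) * (if i \<in> L then (if v = t i then 1 else 0) else 1)
     * (if i \<in> S then (if v = 1 then 1 else 0) else 1)"

lemma prob_ev_field_weight_pinned:
  assumes fin: "finite M" and "L \<subseteq> M" and "S \<subseteq> M"
  shows "prob_ev M (field_weight M l w) (\<lambda>\<sigma>. (\<forall>i\<in>L. \<sigma> i = t i) \<and> (\<forall>i\<in>S. \<sigma> i = 1))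
     = (\<Sum>\<sigma>\<in>cube M. w \<sigma> * (\<Prod>i\<in>M. pinned_factor l L t S i (\<sigma> i)))"
proof -
  have factor: "(\<Prod>i\<in>M. pinned_factor l L t S i (\<sigma> i))
      = (if (\<forall>i\<in>L. \<sigma> i = t i) \<and> (\<forall>i\<in>S. \<sigma> i = 1) then (\<Prod>i\<in>{i\<in>M. \<sigma> i = 1}. l i) else 0)"
    for \<sigma>
  proof -
    have "(\<Prod>i\<in>M. if i \<in> L then (if \<sigma> i = t i then 1 else 0) else 1)
        = (\<Prod>i\<in>M. if i \<in> L \<longrightarrow> \<sigma> i = t i then 1 else (0::real))"
      and "(\<Prod>i\<in>M. if i \<in> S then (if \<sigma> i = 1 then 1 else 0) else 1)
        = (\<Prod>i\<in>M. if i \<in> S \<longrightarrow> \<sigma> i = 1 then 1 else (0::real))"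
      by (auto intro: prod.cong)
    then show ?thesis
      unfolding pinned_factor_def prod.distrib using fin assms(2,3)
      by (auto simp: prod_indicator prod.inter_filter)
  qed
  show ?thesis
    unfolding prob_ev_def field_weight_def factor using fin
    by (simp add: sum.inter_filter finite_cube if_distrib cong: if_cong)
qed

section \<open>Product test functions under the k-transformation\<close>

lemma sum_cube_Times_prod:
  fixes H :: "'i \<Rightarrow> ('j \<Rightarrow> int) \<Rightarrow> real"
  assumes "finite N" and "finite K"
  shows "(\<Sum>Y\<in>cube (N \<times> K). \<Prod>i\<in>N. H i (\<lambda>j. Y (i, j))) = (\<Prod>i\<in>N. \<Sum>y\<in>cube K. H i y)"
proof -
  have "(\<Prod>i\<in>N. \<Sum>y\<in>cube K. H i y) = (\<Sum>g\<in>PiE N (\<lambda>_. cube K). \<Prod>i\<in>N. H i (g i))"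
    using assms by (intro prod_sum_PiE) (auto intro: finite_cube)
  also have "\<dots> = (\<Sum>Y\<in>cube (N \<times> K). \<Prod>i\<in>N. H i (\<lambda>j. Y (i, j)))"
  proof (rule sum.reindex_bij_witness[of _ "\<lambda>Y i. if i \<in> N then (\<lambda>j. Y (i, j)) else undefined"
        "\<lambda>g (i, j). if i \<in> N then g i j else undefined"])
    fix g assume "g \<in> PiE N (\<lambda>_. cube K)"
    then show "(\<lambda>i. if i \<in> N then (\<lambda>j. case (i, j) of (i, j) \<Rightarrow> if i \<in> N then g i j else undefined)
          else undefined) = g"
      and "(\<lambda>(i, j). if i \<in> N then g i j else undefined) \<in> cube (N \<times> K)"
      by (auto simp: cube_def PiE_def extensional_def Pi_def)
    show "(\<Prod>i\<in>N. H i (\<lambda>j. (\<lambda>(i, j). if i \<in> N then g i j else undefined) (i, j)))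
        = (\<Prod>i\<in>N. H i (g i))"
      by (rule prod.cong) (auto simp: fun_eq_iff)
  next
    fix Y assume "Y \<in> cube (N \<times> K)"
    then show "(\<lambda>(i, j). if i \<in> N then (if i \<in> N then (\<lambda>j. Y (i, j)) else undefined) j
          else undefined) = Y"
      and "(\<lambda>i. if i \<in> N then (\<lambda>j. Y (i, j)) else undefined) \<in> PiE N (\<lambda>_. cube K)"
      by (auto simp: cube_def PiE_def extensional_def Pi_def)
  qed
  finally show ?thesis
    by simp
qed

lemma sum_cube_all_minus:
  fixes \<phi> :: "'j \<Rightarrow> int \<Rightarrow> real"
  assumes "finite K"
  shows "(\<Sum>y\<in>cube K. (if \<forall>j\<in>K. y j = -1 then 1 else 0) * (\<Prod>j\<in>K. \<phi> j (y j)))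
       = (\<Prod>j\<in>K. \<phi> j (-1))"
proof -
  have "(\<Sum>y\<in>cube K. (if \<forall>j\<in>K. y j = -1 then 1 else 0) * (\<Prod>j\<in>K. \<phi> j (y j)))
      = (\<Sum>y\<in>cube K. if \<forall>j\<in>K. y j = -1 then \<Prod>j\<in>K. \<phi> j (y j) else 0)"
    by (intro sum.cong) auto
  also have "\<dots> = (\<Sum>y\<in>{y\<in>cube K. \<forall>j\<in>K. y j = -1}. \<Prod>j\<in>K. \<phi> j (y j))"
    by (rule sum.inter_filter[symmetric]) (rule finite_cube[OF assms])
  also have "{y\<in>cube K. \<forall>j\<in>K. y j = -1} = {restrict (\<lambda>_. -1) K}"
    by (auto simp: cube_def PiE_def extensional_def)
  finally show ?thesis
    by simp
qed

lemma cube_one_plus_eq: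
  "{y\<in>cube K. card {j\<in>K. y j = 1} = 1} = (\<lambda>j0. restrict (\<lambda>j. if j = j0 then (1::int) else -1) K) ` K"
proof (intro equalityI subsetI)
  fix y assume "y \<in> {y\<in>cube K. card {j\<in>K. y j = 1} = 1}"
  then have y: "y \<in> cube K" and "card {j\<in>K. y j = 1} = 1"
    by auto
  then obtain j0 where j0: "{j\<in>K. y j = 1} = {j0}"
    using card_1_singletonE by blast
  have "y = restrict (\<lambda>j. if j = j0 then (1::int) else -1) K"
  proof
    fix j
    show "y j = restrict (\<lambda>j. if j = j0 then (1::int) else -1) K j"
      using j0 cube_value[OF y, of j] cube_undefined[OF y, of j] by (cases "j \<in> K") auto
  qed
  moreover have "j0 \<in> K"
    using j0 by blast
  ultimately show "y \<in> (\<lambda>j0. restrict (\<lambda>j. if j = j0 then (1::int) else -1) K) ` K"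
    by blast
next
  fix y assume "y \<in> (\<lambda>j0. restrict (\<lambda>j. if j = j0 then (1::int) else -1) K) ` K"
  then obtain j0 where j0: "j0 \<in> K" "y = restrict (\<lambda>j. if j = j0 then (1::int) else -1) K"
    by blast
  then have "{j\<in>K. y j = 1} = {j0}"
    by auto
  moreover have "y \<in> cube K"
    using j0 unfolding cube_def by (simp add: restrict_PiE_iff)
  ultimately show "y \<in> {y\<in>cube K. card {j\<in>K. y j = 1} = 1}"
    by simp
qed

lemma sum_cube_one_plus:
  fixes \<phi> :: "'j \<Rightarrow> int \<Rightarrow> real"
  assumes fin: "finite K"
  shows "(\<Sum>y\<in>cube K. (if card {j\<in>K. y j = 1} = 1 then c else 0) * (\<Prod>j\<in>K. \<phi> j (y j)))
       = c * (\<Sum>j0\<in>K. \<phi> j0 1 * (\<Prod>j\<in>K - {j0}. \<phi> j (-1)))"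
proof -
  define e where "e j0 = restrict (\<lambda>j. if j = j0 then (1::int) else -1) K" for j0
  have inj: "inj_on e K"
  proof
    fix a b assume "a \<in> K" "b \<in> K" "e a = e b"
    then have "e a a = e b a"
      by simp
    then show "a = b"
      using \<open>a \<in> K\<close> unfolding e_def by (simp split: if_splits)
  qed
  have "(\<Sum>y\<in>cube K. (if card {j\<in>K. y j = 1} = 1 then c else 0) * (\<Prod>j\<in>K. \<phi> j (y j)))
      = (\<Sum>y\<in>cube K. if card {j\<in>K. y j = 1} = 1 then c * (\<Prod>j\<in>K. \<phi> j (y j)) else 0)"
    by (intro sum.cong) auto
  also have "\<dots> = (\<Sum>y\<in>{y\<in>cube K. card {j\<in>K. y j = 1} = 1}. c * (\<Prod>j\<in>K. \<phi> j (y j)))"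
    by (rule sum.inter_filter[symmetric]) (rule finite_cube[OF fin])
  also have "\<dots> = (\<Sum>y\<in>e ` K. c * (\<Prod>j\<in>K. \<phi> j (y j)))"
    unfolding e_def cube_one_plus_eq ..
  also have "\<dots> = (\<Sum>j0\<in>K. c * (\<Prod>j\<in>K. \<phi> j (e j0 j)))"
    by (rule sum.reindex[OF inj, unfolded comp_def])
  also have "\<dots> = (\<Sum>j0\<in>K. c * (\<phi> j0 1 * (\<Prod>j\<in>K - {j0}. \<phi> j (-1))))"
  proof (intro sum.cong refl arg_cong2[where f = "(*)"])
    fix j0 assume j0: "j0 \<in> K"
    have "(\<Prod>j\<in>K - {j0}. \<phi> j (e j0 j)) = (\<Prod>j\<in>K - {j0}. \<phi> j (-1))"
      by (rule prod.cong) (auto simp: e_def)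
    then show "(\<Prod>j\<in>K. \<phi> j (e j0 j)) = \<phi> j0 1 * (\<Prod>j\<in>K - {j0}. \<phi> j (-1))"
      using prod.remove[OF fin j0, of "\<lambda>j. \<phi> j (e j0 j)"] j0 by (simp add: e_def)
  qed
  finally show ?thesis
    by (simp add: sum_distrib_left)
qed

text \<open>Summing the product test function \<phi> over the k sites of block i of Rd, given that the
  original coordinate is x.\<close>

definition Rd_block_weight :: "nat \<Rightarrow> ('i \<times> nat \<Rightarrow> int \<Rightarrow> real) \<Rightarrow> 'i \<Rightarrow> int \<Rightarrow> real" where
  "Rd_block_weight k \<phi> i x =
     (if x = 1 then (1 / real k) * (\<Sum>j\<in>{1..k}. \<phi> (i, j) 1 * (\<Prod>j'\<in>{1..k} - {j}. \<phi> (i, j') (-1)))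
      else (\<Prod>j\<in>{1..k}. \<phi> (i, j) (-1)))"

lemma sum_Rd_prod:
  fixes \<phi> :: "'i \<times> nat \<Rightarrow> int \<Rightarrow> real"
  assumes fin: "finite N"
  shows "(\<Sum>Y\<in>cube (N \<times> {1..k}). Rd N k \<mu> Y * (\<Prod>a\<in>N \<times> {1..k}. \<phi> a (Y a)))
       = (\<Sum>X\<in>cube N. \<mu> X * (\<Prod>i\<in>N. Rd_block_weight k \<phi> i (X i)))"
proof -
  let ?K = "{1..k}"
  define ker where "ker x (y :: nat \<Rightarrow> int) = (if x = -1 then (if \<forall>j\<in>?K. y j = -1 then 1 else 0)
      else (if card {j\<in>?K. y j = 1} = 1 then 1 / real k else (0::real)))" for x :: int and y
  have split: "(\<Prod>a\<in>N \<times> ?K. \<phi> a (Y a)) = (\<Prod>i\<in>N. \<Prod>j\<in>?K. \<phi> (i, j) (Y (i, j)))" for Y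
    by (simp add: prod.cartesian_product)
  have "(\<Sum>Y\<in>cube (N \<times> ?K). Rd N k \<mu> Y * (\<Prod>a\<in>N \<times> ?K. \<phi> a (Y a)))
     = (\<Sum>Y\<in>cube (N \<times> ?K). \<Sum>X\<in>cube N.
          \<mu> X * (\<Prod>i\<in>N. ker (X i) (\<lambda>j. Y (i, j)) * (\<Prod>j\<in>?K. \<phi> (i, j) (Y (i, j)))))"
    unfolding Rd_def split sum_distrib_right
    by (intro sum.cong refl) (simp add: prod.distrib ker_def mult.assoc)
  also have "\<dots> = (\<Sum>X\<in>cube N. \<mu> X * (\<Sum>Y\<in>cube (N \<times> ?K).
          \<Prod>i\<in>N. ker (X i) (\<lambda>j. Y (i, j)) * (\<Prod>j\<in>?K. \<phi> (i, j) (Y (i, j)))))"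
    by (subst sum.swap) (simp add: sum_distrib_left)
  also have "\<dots> = (\<Sum>X\<in>cube N. \<mu> X * (\<Prod>i\<in>N. \<Sum>y\<in>cube ?K. ker (X i) y * (\<Prod>j\<in>?K. \<phi> (i, j) (y j))))"
    using sum_cube_Times_prod[OF fin, of ?K "\<lambda>i y. ker (X i) y * (\<Prod>j\<in>?K. \<phi> (i, j) (y j))" for X]
    by simp
  also have "\<dots> = (\<Sum>X\<in>cube N. \<mu> X * (\<Prod>i\<in>N. Rd_block_weight k \<phi> i (X i)))"
  proof (intro sum.cong refl arg_cong2[where f = "(*)"] prod.cong)
    fix X i assume "X \<in> cube N" and "i \<in> N"
    from cube_value[OF this] consider "X i = 1" | "X i = -1"
      by blast
    then show "(\<Sum>y\<in>cube ?K. ker (X i) y * (\<Prod>j\<in>?K. \<phi> (i, j) (y j))) = Rd_block_weight k \<phi> i (X i)"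
      unfolding ker_def Rd_block_weight_def
      using sum_cube_one_plus[of ?K "1 / real k" "\<lambda>j. \<phi> (i, j)"] sum_cube_all_minus[of ?K "\<lambda>j. \<phi> (i, j)"]
      by cases simp_all
  qed
  finally show ?thesis .
qed

section \<open>Pinning a tilted k-transformation\<close>

locale Rd_pinning =
  fixes N :: "'i set" and k :: nat and \<mu> :: "('i \<Rightarrow> int) \<Rightarrow> real" and lam :: "'i \<times> nat \<Rightarrow> real"
    and \<Lambda> :: "('i \<times> nat) set" and \<tau> :: "'i \<times> nat \<Rightarrow> int"
  assumes finite_N [simp]: "finite N" and k_pos: "1 \<le> k"
    and \<mu>_nonneg: "\<And>X. X \<in> cube N \<Longrightarrow> 0 \<le> \<mu> X"
    and lam_pos: "\<And>a. a \<in> N \<times> {1..k} \<Longrightarrow> 0 < lam a"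
    and \<Lambda>_subset: "\<Lambda> \<subseteq> N \<times> {1..k}"
    and \<tau>_support: "\<tau> \<in> support_marg (N \<times> {1..k}) (tilt (N \<times> {1..k}) lam (Rd N k \<mu>)) \<Lambda>"
begin

abbreviation "Sites \<equiv> N \<times> {1..k}"
abbreviation "Free \<equiv> Sites - \<Lambda>"

definition "\<nu> = cond Sites (tilt Sites lam (Rd N k \<mu>)) \<Lambda> \<tau>"

definition "plus_pins i = {j\<in>{1..k}. (i, j) \<in> \<Lambda> \<and> \<tau> (i, j) = 1}"
definition "minus_pins i = {j\<in>{1..k}. (i, j) \<in> \<Lambda> \<and> \<tau> (i, j) = -1}"
definition "unpinned i = {j\<in>{1..k}. (i, j) \<notin> \<Lambda>}"

text \<open>Block i is decided when the pinning determines the original coordinate X i: it is +1 as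
  soon as one site of the block is pinned to +1, and -1 when all sites are pinned to -1.\<close>

definition "decided = {i\<in>N. plus_pins i \<noteq> {} \<or> unpinned i = {}}"
abbreviation "undecided \<equiv> N - decided"
definition "block_pin = restrict (\<lambda>i. if plus_pins i \<noteq> {} then 1 else -1) decided"

text \<open>An undecided block is +1 with weight proportional to the mean field on its unpinned
  sites, and then its +1 sits at site j with probability share i j.\<close>

definition "block_field i = (if i \<in> decided then 1 else (1 / real k) * (\<Sum>j\<in>unpinned i. lam (i, j)))"
definition "share i j = lam (i, j) / (\<Sum>j'\<in>unpinned i. lam (i, j'))"

definition "\<mu>' = cond N (tilt N block_field \<mu>) decided block_pin"

abbreviation "site_factor S \<equiv> pinned_factor lam \<Lambda> \<tau> S"
abbreviation "block_factor Q \<equiv> pinned_factor block_field decided block_pin Q"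

definition "Rd_weight S = (\<Sum>X\<in>cube N. \<mu> X * (\<Prod>i\<in>N. Rd_block_weight k (site_factor S) i (X i)))"
definition "base_weight Q = (\<Sum>X\<in>cube N. \<mu> X * (\<Prod>i\<in>N. block_factor Q i (X i)))"

definition "decided_factor i = (if i \<in> decided then Rd_block_weight k (site_factor {}) i (block_pin i) else 1)"
definition "common_factor = (\<Prod>i\<in>N. decided_factor i)"

lemma \<tau>_cube: "\<tau> \<in> cube \<Lambda>"
  using \<tau>_support unfolding support_marg_def by auto

lemma \<tau>_value: "a \<in> \<Lambda> \<Longrightarrow> \<tau> a = -1 \<or> \<tau> a = 1"
  using cube_value[OF \<tau>_cube] by blast

lemma block_pin_cube: "block_pin \<in> cube decided"
  unfolding block_pin_def cube_def by auto

lemma decided_subset: "decided \<subseteq> N"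
  unfolding decided_def by auto

lemma undecidedD: "i \<in> undecided \<Longrightarrow> i \<in> N \<and> plus_pins i = {} \<and> unpinned i \<noteq> {}"
  unfolding decided_def by auto

lemma copies_cases: "j \<in> {1..k} \<Longrightarrow> j \<in> plus_pins i \<or> j \<in> minus_pins i \<or> j \<in> unpinned i"
  using \<tau>_value[of "(i, j)"] unfolding plus_pins_def minus_pins_def unpinned_def by auto

lemma unpinned_sum_pos: "i \<in> N \<Longrightarrow> unpinned i \<noteq> {} \<Longrightarrow> 0 < (\<Sum>j\<in>unpinned i. lam (i, j))"
  by (intro sum_pos) (auto simp: unpinned_def intro!: lam_pos)

lemma block_field_pos: "i \<in> N \<Longrightarrow> 0 < block_field i"
  unfolding block_field_def using unpinned_sum_pos[of i] k_pos by (auto simp: decided_def)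

lemma block_field_le:
  assumes "\<And>a. a \<in> Sites \<Longrightarrow> lam a \<le> 1 + \<epsilon>" and "0 \<le> \<epsilon>" and "i \<in> N"
  shows "block_field i \<le> 1 + \<epsilon>"
proof (cases "i \<in> decided")
  case False
  have "(\<Sum>j\<in>unpinned i. lam (i, j)) \<le> real (card (unpinned i)) * (1 + \<epsilon>)"
    using assms(1) \<open>i \<in> N\<close> by (intro sum_bounded_above) (auto simp: unpinned_def)
  also have "\<dots> \<le> real k * (1 + \<epsilon>)"
  proof (intro mult_right_mono)
    have "card (unpinned i) \<le> card {1..k}"
      by (rule card_mono) (auto simp: unpinned_def)
    then show "real (card (unpinned i)) \<le> real k"
      by simp
  qed (use assms(2) in simp)
  finally show ?thesis
    using False k_pos unfolding block_field_def by (simp add: field_simps)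
qed (use assms(2) in \<open>simp add: block_field_def\<close>)

lemma share_pos:
  assumes "i \<in> undecided" and "j \<in> unpinned i"
  shows "0 < share i j"
proof -
  have "0 < (\<Sum>j\<in>unpinned i. lam (i, j))"
    using assms by (intro unpinned_sum_pos) auto
  moreover have "0 < lam (i, j)"
    using assms by (intro lam_pos) (auto simp: unpinned_def)
  ultimately show ?thesis
    unfolding share_def by simp
qed

lemma sum_share: "i \<in> undecided \<Longrightarrow> (\<Sum>j\<in>unpinned i. share i j) = 1"
  unfolding share_def using unpinned_sum_pos[of i] undecidedD[of i]
  by (simp add: sum_divide_distrib[symmetric])

lemma share_le_1: "i \<in> undecided \<Longrightarrow> j \<in> unpinned i \<Longrightarrow> share i j \<le> 1"
  using member_le_sum[of j "unpinned i" "share i"] share_pos sum_share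
  by (fastforce simp: unpinned_def less_imp_le)

lemma site_factor_minus:
  "j \<in> {1..k} \<Longrightarrow> site_factor S (i, j) (-1) = (if j \<in> plus_pins i \<or> (i, j) \<in> S then 0 else 1)"
  using \<tau>_value[of "(i, j)"] unfolding pinned_factor_def plus_pins_def by auto

lemma site_factor_plus:
  "j \<in> {1..k} \<Longrightarrow> site_factor S (i, j) 1 = (if j \<in> minus_pins i then 0 else lam (i, j))"
  using \<tau>_value[of "(i, j)"] unfolding pinned_factor_def minus_pins_def by auto

lemma Rd_block_weight_minus:
  "Rd_block_weight k (site_factor S) i (-1) = (if \<exists>j\<in>{1..k}. j \<in> plus_pins i \<or> (i, j) \<in> S then 0 else 1)"
proof -
  have "Rd_block_weight k (site_factor S) i (-1)
      = (\<Prod>j\<in>{1..k}. if \<not> (j \<in> plus_pins i \<or> (i, j) \<in> S) then 1 else 0)"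
    unfolding Rd_block_weight_def by (auto simp: site_factor_minus intro: prod.cong)
  then show ?thesis
    by (simp add: prod_indicator)
qed

lemma Rd_block_weight_plus:
  "Rd_block_weight k (site_factor S) i 1 = (1 / real k) * (\<Sum>j\<in>{1..k}.
     (if j \<in> minus_pins i then 0 else lam (i, j))
     * (if \<exists>j'\<in>{1..k} - {j}. j' \<in> plus_pins i \<or> (i, j') \<in> S then 0 else 1))"
proof -
  have "(\<Prod>j'\<in>{1..k} - {j}. site_factor S (i, j') (-1))
      = (if \<exists>j'\<in>{1..k} - {j}. j' \<in> plus_pins i \<or> (i, j') \<in> S then 0 else 1)" for j
  proof -
    have "(\<Prod>j'\<in>{1..k} - {j}. site_factor S (i, j') (-1))
        = (\<Prod>j'\<in>{1..k} - {j}. if \<not> (j' \<in> plus_pins i \<or> (i, j') \<in> S) then 1 else 0)"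
      by (intro prod.cong) (auto simp: site_factor_minus)
    then show ?thesis
      by (simp add: prod_indicator)
  qed
  then show ?thesis
    unfolding Rd_block_weight_def by (simp add: site_factor_plus)
qed

lemma Rd_block_weight_undecided:
  assumes i: "i \<in> undecided" and S: "\<And>j. (i, j) \<notin> S" and Q: "i \<notin> Q" and v: "v = -1 \<or> v = 1"
  shows "Rd_block_weight k (site_factor S) i v = block_factor Q i v"
  using v
proof
  assume "v = 1"
  have "(\<Sum>j\<in>{1..k}. if j \<in> minus_pins i then 0 else lam (i, j))
      = (\<Sum>j\<in>{1..k}. if j \<in> unpinned i then lam (i, j) else 0)"
    using copies_cases[of _ i] undecidedD[OF i]
    by (intro sum.cong) (auto simp: unpinned_def minus_pins_def)
  also have "\<dots> = (\<Sum>j\<in>unpinned i. lam (i, j))"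
    by (simp add: sum.inter_filter[symmetric] unpinned_def)
  finally show ?thesis
    using i S Q undecidedD[OF i] \<open>v = 1\<close>
    by (simp add: Rd_block_weight_plus block_field_def pinned_factor_def)
qed (use i S Q undecidedD[OF i] in \<open>simp add: Rd_block_weight_minus pinned_factor_def\<close>)

lemma Rd_block_weight_undecided_marked:
  assumes i: "i \<in> undecided" and S: "\<And>j. (i, j) \<in> S \<longleftrightarrow> j = j0" and j0: "j0 \<in> unpinned i"
    and Q: "i \<in> Q" and v: "v = -1 \<or> v = 1"
  shows "Rd_block_weight k (site_factor S) i v = share i j0 * block_factor Q i v"
  using v
proof
  assume "v = 1"
  have j0': "j0 \<in> {1..k}" "j0 \<notin> minus_pins i"
    using j0 unfolding unpinned_def minus_pins_def by auto
  have "Rd_block_weight k (site_factor S) i 1 = (1 / real k) * (\<Sum>j\<in>{1..k}. if j = j0 then lam (i, j0) else 0)"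
    unfolding Rd_block_weight_plus using S undecidedD[OF i] j0'
    by (intro arg_cong2[where f = "(*)"] refl sum.cong) auto
  also have "\<dots> = share i j0 * block_field i"
    using unpinned_sum_pos[of i] undecidedD[OF i] i j0' unfolding share_def block_field_def by simp
  finally show ?thesis
    using i Q \<open>v = 1\<close> by (simp add: pinned_factor_def)
qed (use S j0 Q in \<open>auto simp: Rd_block_weight_minus pinned_factor_def unpinned_def\<close>)

lemma Rd_block_weight_decided:
  assumes i: "i \<in> decided" and S: "\<And>j. (i, j) \<notin> S" and Q: "i \<notin> Q" and v: "v = -1 \<or> v = 1"
  shows "Rd_block_weight k (site_factor S) i v = decided_factor i * block_factor Q i v"
proof -
  have same: "Rd_block_weight k (site_factor S) i = Rd_block_weight k (site_factor {}) i"
    unfolding Rd_block_weight_def using S by (auto simp: pinned_factor_def fun_eq_iff)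
  have "Rd_block_weight k (site_factor {}) i v = 0" if "v \<noteq> block_pin i"
  proof (cases "plus_pins i = {}")
    case False
    then have "v = -1" and "\<exists>j\<in>{1..k}. j \<in> plus_pins i"
      using that v i unfolding block_pin_def plus_pins_def by auto
    then show ?thesis
      by (simp add: Rd_block_weight_minus)
  next
    case True
    then have "v = 1" and "unpinned i = {}"
      using that v i unfolding block_pin_def decided_def by auto
    then have "\<And>j. j \<in> {1..k} \<Longrightarrow> j \<in> minus_pins i"
      using copies_cases True by blast
    then show ?thesis
      unfolding \<open>v = 1\<close> Rd_block_weight_plus by simp
  qed
  then show ?thesis
    unfolding same decided_factor_def using i Q by (auto simp: pinned_factor_def block_field_def)
qed

lemma Rd_block_weight_two_marks:
  assumes "(i, j) \<in> S" "(i, j') \<in> S" "j \<noteq> j'" "j \<in> {1..k}" "j' \<in> {1..k}" and v: "v = -1 \<or> v = 1"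
  shows "Rd_block_weight k (site_factor S) i v = 0"
proof -
  have all: "\<exists>j''\<in>{1..k} - {j0}. j'' \<in> plus_pins i \<or> (i, j'') \<in> S" for j0
    using assms by (cases "j0 = j") auto
  have ex: "\<exists>j''\<in>{1..k}. j'' \<in> plus_pins i \<or> (i, j'') \<in> S"
    using assms by blast
  show ?thesis
    using v
  proof
    assume "v = -1"
    then show ?thesis
      using ex by (simp add: Rd_block_weight_minus)
  next
    assume "v = 1"
    then show ?thesis
      using all by (simp add: Rd_block_weight_plus)
  qed
qed

lemma Rd_block_weight_decided_marked:
  assumes i: "i \<in> decided" and S: "(i, j) \<in> S" "S \<subseteq> Free" and v: "v = -1 \<or> v = 1"
  shows "Rd_block_weight k (site_factor S) i v = 0"
proof -
  have j: "j \<in> unpinned i"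
    using S unfolding unpinned_def by auto
  then obtain p where p: "p \<in> plus_pins i"
    using i unfolding decided_def by auto
  have p': "p \<in> {1..k}" "p \<noteq> j"
    using p j unfolding plus_pins_def unpinned_def by auto
  have all: "\<exists>j'\<in>{1..k} - {j0}. j' \<in> plus_pins i \<or> (i, j') \<in> S" for j0
    using p p' j S unfolding unpinned_def by (cases "j0 = p") auto
  have ex: "\<exists>j'\<in>{1..k}. j' \<in> plus_pins i \<or> (i, j') \<in> S"
    using p p' by blast
  show ?thesis
    using v
  proof
    assume "v = -1"
    then show ?thesis
      using ex by (simp add: Rd_block_weight_minus)
  next
    assume "v = 1"
    then show ?thesis
      using all by (simp add: Rd_block_weight_plus)
  qed
qed

lemma Rd_weight_eq_prod:
  assumes "\<And>i v. i \<in> N \<Longrightarrow> v = -1 \<or> v = 1 \<Longrightarrow> Rd_block_weight k (site_factor S) i v = c i * block_factor Q i v"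
  shows "Rd_weight S = (\<Prod>i\<in>N. c i) * base_weight Q"
proof -
  have "Rd_weight S = (\<Sum>X\<in>cube N. \<mu> X * (\<Prod>i\<in>N. c i * block_factor Q i (X i)))"
    unfolding Rd_weight_def
  proof (intro sum.cong refl arg_cong2[where f = "(*)"] prod.cong)
    fix X i assume "X \<in> cube N" and "i \<in> N"
    then show "Rd_block_weight k (site_factor S) i (X i) = c i * block_factor Q i (X i)"
      by (intro assms cube_value)
  qed
  then show ?thesis
    unfolding base_weight_def prod.distrib sum_distrib_left by (simp add: ac_simps)
qed

lemma Rd_weight_eq_0:
  assumes "i \<in> N" and "\<And>v. v = -1 \<or> v = 1 \<Longrightarrow> Rd_block_weight k (site_factor S) i v = 0"
  shows "Rd_weight S = 0"
  unfolding Rd_weight_def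
proof (intro sum.neutral ballI)
  fix X assume "X \<in> cube N"
  then have "X i = -1 \<or> X i = 1"
    using assms(1) by (rule cube_value)
  then have "Rd_block_weight k (site_factor S) i (X i) = 0"
    by (rule assms(2))
  then have "(\<Prod>i\<in>N. Rd_block_weight k (site_factor S) i (X i)) = 0"
    using assms(1) by (intro prod_zero) auto
  then show "\<mu> X * (\<Prod>i\<in>N. Rd_block_weight k (site_factor S) i (X i)) = 0"
    by simp
qed

lemma Rd_weight_marks:
  assumes Q: "Q \<subseteq> undecided" and f: "\<And>i. i \<in> Q \<Longrightarrow> f i \<in> unpinned i"
  shows "Rd_weight ((\<lambda>i. (i, f i)) ` Q) = common_factor * (\<Prod>i\<in>Q. share i (f i)) * base_weight Q"
proof -
  let ?S = "(\<lambda>i. (i, f i)) ` Q"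
  have "Rd_weight ?S = (\<Prod>i\<in>N. decided_factor i * (if i \<in> Q then share i (f i) else 1)) * base_weight Q"
  proof (rule Rd_weight_eq_prod)
    fix i and v :: int assume i: "i \<in> N" and v: "v = -1 \<or> v = 1"
    consider "i \<in> Q" | "i \<notin> Q" "i \<in> decided" | "i \<notin> Q" "i \<in> undecided"
      using i by blast
    then show "Rd_block_weight k (site_factor ?S) i v
        = decided_factor i * (if i \<in> Q then share i (f i) else 1) * block_factor Q i v"
    proof cases
      case 1
      then show ?thesis
        using Rd_block_weight_undecided_marked[of i ?S "f i" Q v] Q f v by (auto simp: decided_factor_def)
    next
      case 2
      then show ?thesis
        using Rd_block_weight_decided[of i ?S Q v] v by auto
    next
      case 3
      then show ?thesis
        using Rd_block_weight_undecided[of i ?S Q v] v by (auto simp: decided_factor_def)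
    qed
  qed
  also have "(\<Prod>i\<in>N. decided_factor i * (if i \<in> Q then share i (f i) else 1))
      = common_factor * (\<Prod>i\<in>Q. share i (f i))"
    unfolding common_factor_def prod.distrib using Q
    by (simp add: prod.If_cases Int_absorb1 Int_absorb2 subset_iff)
  finally show ?thesis .
qed

lemma Rd_weight_two_marks:
  "i \<in> N \<Longrightarrow> j \<in> {1..k} \<Longrightarrow> j' \<in> {1..k} \<Longrightarrow> j \<noteq> j' \<Longrightarrow> Rd_weight {(i, j), (i, j')} = 0"
  by (rule Rd_weight_eq_0) (auto intro: Rd_block_weight_two_marks[of i j _ j'])

lemma Rd_weight_decided_mark:
  assumes "i \<in> decided" and "(i, j) \<in> Free"
  shows "Rd_weight {(i, j)} = 0"
proof (rule Rd_weight_eq_0)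
  show "i \<in> N"
    using assms(1) decided_subset by auto
  show "Rd_block_weight k (site_factor {(i, j)}) i v = 0" if "v = -1 \<or> v = 1" for v
    using assms that by (intro Rd_block_weight_decided_marked[of i j]) auto
qed

lemma Rd_nonneg: "0 \<le> Rd N k \<mu> Y"
  unfolding Rd_def by (intro sum_nonneg mult_nonneg_nonneg \<mu>_nonneg prod_nonneg) auto

lemma field_weight_Rd_nonneg: "0 \<le> field_weight Sites lam (Rd N k \<mu>) Y"
  unfolding field_weight_def using lam_pos
  by (intro mult_nonneg_nonneg Rd_nonneg prod_nonneg) (auto intro: less_imp_le)

lemma field_weight_base_nonneg: "X \<in> cube N \<Longrightarrow> 0 \<le> field_weight N block_field \<mu> X"
  unfolding field_weight_def using block_field_pos
  by (intro mult_nonneg_nonneg \<mu>_nonneg prod_nonneg) (auto intro: less_imp_le)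

lemma prob_field_weight_Rd:
  assumes "S \<subseteq> Sites"
  shows "prob_ev Sites (field_weight Sites lam (Rd N k \<mu>)) (\<lambda>Y. (\<forall>a\<in>\<Lambda>. Y a = \<tau> a) \<and> (\<forall>a\<in>S. Y a = 1))
       = Rd_weight S"
proof -
  have "prob_ev Sites (field_weight Sites lam (Rd N k \<mu>)) (\<lambda>Y. (\<forall>a\<in>\<Lambda>. Y a = \<tau> a) \<and> (\<forall>a\<in>S. Y a = 1))
      = (\<Sum>Y\<in>cube Sites. Rd N k \<mu> Y * (\<Prod>a\<in>Sites. site_factor S a (Y a)))"
    by (rule prob_ev_field_weight_pinned) (use \<Lambda>_subset assms in auto)
  also have "\<dots> = Rd_weight S"
    unfolding Rd_weight_def by (rule sum_Rd_prod) simp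
  finally show ?thesis .
qed

lemma prob_field_weight_base:
  assumes "Q \<subseteq> N"
  shows "prob_ev N (field_weight N block_field \<mu>) (\<lambda>X. (\<forall>i\<in>decided. X i = block_pin i) \<and> (\<forall>i\<in>Q. X i = 1))
       = base_weight Q"
  unfolding base_weight_def by (rule prob_ev_field_weight_pinned[OF _ decided_subset assms]) simp

lemma block_factor_nonneg: "i \<in> N \<Longrightarrow> 0 \<le> block_factor Q i v"
  unfolding pinned_factor_def using block_field_pos[of i] by auto

lemma base_weight_nonneg: "0 \<le> base_weight Q"
  unfolding base_weight_def using block_factor_nonneg
  by (intro sum_nonneg mult_nonneg_nonneg prod_nonneg \<mu>_nonneg) auto

lemma base_weight_antimono:
  assumes "Q \<subseteq> Q'"
  shows "base_weight Q' \<le> base_weight Q"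
  unfolding base_weight_def
proof (rule sum_mono)
  fix X assume X: "X \<in> cube N"
  have "(\<Prod>i\<in>N. block_factor Q' i (X i)) \<le> (\<Prod>i\<in>N. block_factor Q i (X i))"
  proof (rule prod_mono)
    fix i assume i: "i \<in> N"
    show "0 \<le> block_factor Q' i (X i) \<and> block_factor Q' i (X i) \<le> block_factor Q i (X i)"
      using assms block_factor_nonneg[OF i, of Q' "X i"] block_factor_nonneg[OF i, of Q "X i"]
      unfolding pinned_factor_def by auto
  qed
  then show "\<mu> X * (\<Prod>i\<in>N. block_factor Q' i (X i)) \<le> \<mu> X * (\<Prod>i\<in>N. block_factor Q i (X i))"
    using \<mu>_nonneg[OF X] by (rule mult_left_mono)
qed

lemma Rd_weight_empty_pos: "0 < Rd_weight {}"
proof -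
  have "marginal Sites (tilt Sites lam (Rd N k \<mu>)) \<Lambda> \<tau>
      = Rd_weight {} / (\<Sum>Y\<in>cube Sites. field_weight Sites lam (Rd N k \<mu>) Y)"
    unfolding marginal_def prob_ev_tilt using prob_field_weight_Rd[of "{}"] by simp
  moreover have "0 < marginal Sites (tilt Sites lam (Rd N k \<mu>)) \<Lambda> \<tau>"
    using \<tau>_support unfolding support_marg_def by auto
  moreover have "0 \<le> (\<Sum>Y\<in>cube Sites. field_weight Sites lam (Rd N k \<mu>) Y)"
    by (intro sum_nonneg field_weight_Rd_nonneg)
  ultimately show ?thesis
    by (metis divide_nonpos_nonneg not_less)
qed

lemma common_factor_nonzero: "common_factor \<noteq> 0"
  and base_weight_empty_pos: "0 < base_weight {}"
proof -
  have "0 < common_factor * base_weight {}"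
    using Rd_weight_empty_pos Rd_weight_marks[of "{}"] by simp
  moreover have "0 \<le> base_weight {}"
    by (rule base_weight_nonneg)
  ultimately show "common_factor \<noteq> 0" "0 < base_weight {}"
    by (auto simp: zero_less_mult_iff)
qed

lemma block_pin_support: "block_pin \<in> support_marg N (tilt N block_field \<mu>) decided"
proof -
  have "base_weight {} \<le> (\<Sum>X\<in>cube N. field_weight N block_field \<mu> X)"
    unfolding prob_field_weight_base[of "{}", simplified, symmetric] prob_ev_def
    by (rule sum_mono2) (auto intro: finite_cube field_weight_base_nonneg)
  then have "0 < marginal N (tilt N block_field \<mu>) decided block_pin"
    unfolding marginal_def prob_ev_tilt using prob_field_weight_base[of "{}"] base_weight_empty_pos
    by simp
  then show ?thesis
    unfolding support_marg_def using block_pin_cube by simp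
qed

lemma prob_\<nu>_all_plus:
  assumes "S \<subseteq> Free"
  shows "prob_ev Free \<nu> (\<lambda>Y. \<forall>a\<in>S. Y a = 1) = Rd_weight S / Rd_weight {}"
proof -
  have "0 < marginal Sites (tilt Sites lam (Rd N k \<mu>)) \<Lambda> \<tau>"
    using \<tau>_support unfolding support_marg_def by auto
  then have "prob_ev Free \<nu> (\<lambda>Y. \<forall>a\<in>S. Y a = 1)
      = prob_ev Sites (field_weight Sites lam (Rd N k \<mu>)) (\<lambda>Y. (\<forall>a\<in>\<Lambda>. Y a = \<tau> a) \<and> (\<forall>a\<in>S. Y a = 1))
        / prob_ev Sites (field_weight Sites lam (Rd N k \<mu>)) (\<lambda>Y. \<forall>a\<in>\<Lambda>. Y a = \<tau> a)"
    unfolding \<nu>_def using assms by (intro prob_ev_cond_tilt \<Lambda>_subset \<tau>_cube) auto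
  then show ?thesis
    using prob_field_weight_Rd[of S] prob_field_weight_Rd[of "{}"] assms by auto
qed

lemma prob_\<mu>'_all_plus:
  assumes "Q \<subseteq> undecided"
  shows "prob_ev undecided \<mu>' (\<lambda>X. \<forall>i\<in>Q. X i = 1) = base_weight Q / base_weight {}"
proof -
  have "prob_ev undecided \<mu>' (\<lambda>X. \<forall>i\<in>Q. X i = 1)
      = prob_ev N (field_weight N block_field \<mu>) (\<lambda>X. (\<forall>i\<in>decided. X i = block_pin i) \<and> (\<forall>i\<in>Q. X i = 1))
        / prob_ev N (field_weight N block_field \<mu>) (\<lambda>X. \<forall>i\<in>decided. X i = block_pin i)"
    unfolding \<mu>'_def using assms block_pin_support
    by (intro prob_ev_cond_tilt decided_subset block_pin_cube) (auto simp: support_marg_def)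
  then show ?thesis
    using prob_field_weight_base[of Q] prob_field_weight_base[of "{}"] assms by auto
qed

lemma prob_\<nu>_marks:
  assumes Q: "Q \<subseteq> undecided" and f: "\<And>i. i \<in> Q \<Longrightarrow> f i \<in> unpinned i"
  shows "prob_ev Free \<nu> (\<lambda>Y. \<forall>i\<in>Q. Y (i, f i) = 1)
       = (\<Prod>i\<in>Q. share i (f i)) * prob_ev undecided \<mu>' (\<lambda>X. \<forall>i\<in>Q. X i = 1)"
proof -
  have event: "(\<lambda>Y. \<forall>i\<in>Q. Y (i, f i) = 1) = (\<lambda>Y. \<forall>a\<in>(\<lambda>i. (i, f i)) ` Q. Y a = 1)"
    by auto
  have marks: "(\<lambda>i. (i, f i)) ` Q \<subseteq> Free"
    using Q f unfolding unpinned_def by auto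
  show ?thesis
    unfolding event prob_\<nu>_all_plus[OF marks] prob_\<mu>'_all_plus[OF Q]
    using Rd_weight_marks[OF Q f] Rd_weight_marks[of "{}"] common_factor_nonzero by simp
qed

definition "undecided_sites = Sigma undecided unpinned"
definition "block_corr = psi_abscor undecided \<mu>'"
abbreviation "plus_prob i \<equiv> prob_ev undecided \<mu>' (\<lambda>X. X i = 1)"

lemma undecided_sites_iff: "(i, j) \<in> undecided_sites \<longleftrightarrow> i \<in> undecided \<and> j \<in> unpinned i"
  unfolding undecided_sites_def by auto

lemma undecided_sites_subset: "undecided_sites \<subseteq> Free"
  unfolding undecided_sites_def unpinned_def by auto

lemma Free_not_decided_in_undecided_sites: "a \<in> Free \<Longrightarrow> fst a \<notin> decided \<Longrightarrow> a \<in> undecided_sites"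
  unfolding undecided_sites_def unpinned_def by (cases a) auto

lemma plus_prob_eq: "i \<in> undecided \<Longrightarrow> plus_prob i = base_weight {i} / base_weight {}"
  using prob_\<mu>'_all_plus[of "{i}"] by simp

lemma plus_prob_range: "i \<in> undecided \<Longrightarrow> 0 \<le> plus_prob i \<and> plus_prob i \<le> 1"
  using base_weight_antimono[of "{}" "{i}"] base_weight_nonneg[of "{i}"] base_weight_empty_pos
    plus_prob_eq[of i]
  by (simp add: divide_le_eq_1)

lemma prob_\<nu>_True: "prob_ev Free \<nu> (\<lambda>Y. True) = 1"
  using prob_\<nu>_all_plus[of "{}"] Rd_weight_empty_pos by simp

lemma prob_\<nu>_minus: "a \<in> Free \<Longrightarrow> prob_ev Free \<nu> (\<lambda>Y. Y a = -1) = 1 - prob_ev Free \<nu> (\<lambda>Y. Y a = 1)"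
  using prob_ev_minus_one[of Free] prob_\<nu>_True by simp

lemma prob_\<nu>_site:
  assumes "(i, j) \<in> undecided_sites"
  shows "prob_ev Free \<nu> (\<lambda>Y. Y (i, j) = 1) = share i j * plus_prob i"
  using prob_\<nu>_marks[of "{i}" "\<lambda>_. j"] assms unfolding undecided_sites_iff by simp

lemma prob_\<nu>_two_blocks:
  assumes "(i, j) \<in> undecided_sites" and "(i', j') \<in> undecided_sites" and "i \<noteq> i'"
  shows "prob_ev Free \<nu> (\<lambda>Y. Y (i, j) = 1 \<and> Y (i', j') = 1)
       = share i j * share i' j' * prob_ev undecided \<mu>' (\<lambda>X. X i = 1 \<and> X i' = 1)"
proof -
  have "prob_ev Free \<nu> (\<lambda>Y. \<forall>l\<in>{i, i'}. Y (l, if l = i then j else j') = 1)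
      = (\<Prod>l\<in>{i, i'}. share l (if l = i then j else j')) * prob_ev undecided \<mu>' (\<lambda>X. \<forall>l\<in>{i, i'}. X l = 1)"
    by (rule prob_\<nu>_marks) (use assms in \<open>auto simp: undecided_sites_iff\<close>)
  then show ?thesis
    using assms(3) by simp
qed

lemma prob_\<nu>_decided_site:
  assumes "(i, j) \<in> Free" and "i \<in> decided"
  shows "prob_ev Free \<nu> (\<lambda>Y. Y (i, j) = 1) = 0"
  using prob_\<nu>_all_plus[of "{(i, j)}"] Rd_weight_decided_mark[OF assms(2,1)] assms(1) by simp

lemma prob_\<nu>_same_block:
  assumes "(i, j) \<in> Free" and "(i, j') \<in> Free" and "j \<noteq> j'"
  shows "prob_ev Free \<nu> (\<lambda>Y. Y (i, j) = 1 \<and> Y (i, j') = 1) = 0"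
  using prob_\<nu>_all_plus[of "{(i, j), (i, j')}"] Rd_weight_two_marks[of i j j'] assms by simp

lemma psi_abscor_\<nu>_decided:
  assumes a: "a \<in> Free" and "fst a \<in> decided" and b: "b \<in> Free"
  shows "psi_abscor Free \<nu> a b = (if b = a then 1 else 0)"
proof -
  have zero: "prob_ev Free \<nu> (\<lambda>Y. Y a = 1) = 0"
    using prob_\<nu>_decided_site[of "fst a" "snd a"] assms by simp
  show ?thesis
  proof (cases "b = a")
    case True
    then show ?thesis
      using prob_\<nu>_minus[OF a] zero by (simp add: psi_abscor_def psi_cor_diag)
  next
    case False
    then show ?thesis
      unfolding psi_abscor_def using psi_cor_offdiag[OF _ a b] zero by auto
  qed
qed

lemma psi_abscor_\<nu>_same_block:
  assumes a: "(i, j) \<in> undecided_sites" and b: "(i, j') \<in> undecided_sites"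
  shows "psi_abscor Free \<nu> (i, j) (i, j') \<le> (if j = j' then 1 else 0) + share i j'"
proof -
  have i: "i \<in> undecided" and j: "j \<in> unpinned i" "j' \<in> unpinned i"
    using a b unfolding undecided_sites_iff by auto
  have ranges: "0 \<le> plus_prob i" "plus_prob i \<le> 1" "0 < share i j" "share i j \<le> 1"
    "0 < share i j'" "share i j' \<le> 1"
    using plus_prob_range[OF i] share_pos[OF i] share_le_1[OF i] j by auto
  have ab: "(i, j) \<in> Free" "(i, j') \<in> Free"
    using a b undecided_sites_subset by auto
  show ?thesis
  proof (cases "j = j'")
    case True
    have "psi_abscor Free \<nu> (i, j) (i, j) = \<bar>1 - share i j * plus_prob i\<bar>"
      unfolding psi_abscor_def psi_cor_diag prob_\<nu>_minus[OF ab(1)] prob_\<nu>_site[OF a] ..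
    also have "\<dots> \<le> 1"
      using ranges by (simp add: mult_le_one)
    finally show ?thesis
      using True ranges by simp
  next
    case False
    have "psi_cor Free \<nu> (i, j) (i, j')
        = (if 0 < prob_ev Free \<nu> (\<lambda>Y. Y (i, j) = 1) then - (share i j' * plus_prob i) else 0)"
      using psi_cor_offdiag[of Free "(i, j)" "(i, j')" \<nu>] ab False prob_\<nu>_same_block[OF ab False]
        prob_\<nu>_site[OF b] by simp
    then have "psi_abscor Free \<nu> (i, j) (i, j') \<le> share i j' * plus_prob i"
      using ranges by (simp add: psi_abscor_def)
    also have "\<dots> \<le> share i j'"
      using ranges by (simp add: mult_left_le)
    finally show ?thesis
      using False by simp
  qed
qed

lemma psi_abscor_\<nu>_two_blocks:
  assumes a: "(i, j) \<in> undecided_sites" and b: "(i', j') \<in> undecided_sites" and "i \<noteq> i'"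
  shows "psi_abscor Free \<nu> (i, j) (i', j') = share i' j' * block_corr i i'"
proof -
  have i: "i \<in> undecided" "i' \<in> undecided" and q: "0 < share i j" "0 < share i' j'"
    using a b share_pos unfolding undecided_sites_iff by auto
  have ab: "(i, j) \<in> Free" "(i', j') \<in> Free"
    using a b undecided_sites_subset by auto
  have "psi_cor Free \<nu> (i, j) (i', j') = share i' j' * psi_cor undecided \<mu>' i i'"
    using psi_cor_offdiag[of Free "(i, j)" "(i', j')" \<nu>] psi_cor_offdiag[of undecided i i' \<mu>']
      prob_\<nu>_two_blocks[OF a b \<open>i \<noteq> i'\<close>] prob_\<nu>_site[OF a] prob_\<nu>_site[OF b] ab i q \<open>i \<noteq> i'\<close>
    by (simp add: zero_less_mult_iff field_simps)
  then show ?thesis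
    unfolding psi_abscor_def block_corr_def using q by (simp add: abs_mult)
qed

lemma psi_abscor_\<nu>_le:
  assumes a: "(i, j) \<in> undecided_sites" and b: "(i', j') \<in> undecided_sites"
  shows "psi_abscor Free \<nu> (i, j) (i', j')
       \<le> block_corr i i' * share i' j' + (if i = i' then (if j = j' then 1 else 0) + share i' j' else 0)"
proof (cases "i = i'")
  case True
  have "0 \<le> block_corr i i' * share i' j'"
    using b share_pos[of i' j'] unfolding block_corr_def psi_abscor_def undecided_sites_iff by simp
  then show ?thesis
    using psi_abscor_\<nu>_same_block[of i j j'] a b True by simp
qed (use psi_abscor_\<nu>_two_blocks[OF a b] in simp)

lemma sum_undecided_sites_row_bound:
  assumes "(i, j) \<in> undecided_sites"
  shows "(\<Sum>(i', j')\<in>undecided_sites. (block_corr i i' * share i' j'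
            + (if i = i' then (if j = j' then 1 else 0) + share i' j' else 0)) * u (i', j'))
       = mat_apply undecided block_corr (\<lambda>i'. \<Sum>j'\<in>unpinned i'. share i' j' * u (i', j')) i
         + u (i, j) + (\<Sum>j'\<in>unpinned i. share i j' * u (i, j'))"
proof -
  have fin: "finite (unpinned i')" for i'
    unfolding unpinned_def by simp
  have i: "i \<in> undecided" and j: "j \<in> unpinned i"
    using assms unfolding undecided_sites_iff by auto
  let ?g = "\<lambda>i' j'. (block_corr i i' * share i' j'
            + (if i = i' then (if j = j' then 1 else 0) + share i' j' else 0)) * u (i', j')"
  have "(\<Sum>(i', j')\<in>undecided_sites. ?g i' j') = (\<Sum>i'\<in>undecided. \<Sum>j'\<in>unpinned i'. ?g i' j')"
    unfolding undecided_sites_def by (rule sum.Sigma[symmetric]) (auto simp: fin)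
  also have "\<dots> = (\<Sum>i'\<in>undecided. block_corr i i' * (\<Sum>j'\<in>unpinned i'. share i' j' * u (i', j'))
          + (if i = i' then \<Sum>j'\<in>unpinned i. ((if j = j' then 1 else 0) + share i j') * u (i, j') else 0))"
  proof (intro sum.cong refl)
    fix i' assume "i' \<in> undecided"
    show "(\<Sum>j'\<in>unpinned i'. ?g i' j') = block_corr i i' * (\<Sum>j'\<in>unpinned i'. share i' j' * u (i', j'))
        + (if i = i' then \<Sum>j'\<in>unpinned i. ((if j = j' then 1 else 0) + share i j') * u (i, j') else 0)"
      by (cases "i = i'") (simp_all add: distrib_right sum.distrib sum_distrib_left mult.assoc)
  qed
  also have "\<dots> = mat_apply undecided block_corr (\<lambda>i'. \<Sum>j'\<in>unpinned i'. share i' j' * u (i', j')) i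
      + (\<Sum>j'\<in>unpinned i. ((if j = j' then 1 else 0) + share i j') * u (i, j'))"
    using i by (simp add: sum.distrib mat_apply_def)
  also have "(\<Sum>j'\<in>unpinned i. ((if j = j' then 1 else 0) + share i j') * u (i, j'))
      = u (i, j) + (\<Sum>j'\<in>unpinned i. share i j' * u (i, j'))"
  proof -
    have "(\<Sum>j'\<in>unpinned i. ((if j = j' then 1 else 0) + share i j') * u (i, j'))
        = (\<Sum>j'\<in>unpinned i. (if j = j' then u (i, j') else 0) + share i j' * u (i, j'))"
      by (intro sum.cong) (auto simp: distrib_right)
    then show ?thesis
      using j fin by (simp add: sum.distrib sum.delta)
  qed
  finally show ?thesis
    by simp
qed

definition "block_mass x i = (\<Sum>j\<in>unpinned i. share i j * cmod (x (i, j)))"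

context
  fixes x :: "'i \<times> nat \<Rightarrow> complex" and c :: complex
  assumes eigen: "\<And>a. a \<in> Free \<Longrightarrow> (\<Sum>b\<in>Free. complex_of_real (psi_abscor Free \<nu> a b) * x b) = c * x a"
    and c: "c \<noteq> 1"
begin

text \<open>The rows of the decided sites are unit vectors.\<close>

lemma eigenvector_decided:
  assumes a: "a \<in> Free" and "fst a \<in> decided"
  shows "x a = 0"
proof -
  have "(\<Sum>b\<in>Free. complex_of_real (psi_abscor Free \<nu> a b) * x b) = (\<Sum>b\<in>Free. if b = a then x b else 0)"
  proof (rule sum.cong[OF refl])
    fix b assume "b \<in> Free"
    from psi_abscor_\<nu>_decided[OF assms this]
    show "complex_of_real (psi_abscor Free \<nu> a b) * x b = (if b = a then x b else 0)"
      by simp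
  qed
  also have "\<dots> = x a"
    using a by (simp add: sum.delta')
  finally have "(c - 1) * x a = 0"
    using eigen[OF a] by (simp add: algebra_simps)
  then show ?thesis
    using c by simp
qed

lemma eigenvector_row_bound:
  assumes a: "(i, j) \<in> undecided_sites"
  shows "cmod c * cmod (x (i, j))
       \<le> mat_apply undecided block_corr (block_mass x) i + cmod (x (i, j)) + block_mass x i"
proof -
  let ?A = "psi_abscor Free \<nu> (i, j)"
  have "cmod c * cmod (x (i, j)) = cmod (\<Sum>b\<in>Free. complex_of_real (?A b) * x b)"
    using eigen a undecided_sites_subset by (auto simp: norm_mult)
  also have "\<dots> \<le> (\<Sum>b\<in>Free. ?A b * cmod (x b))"
    by (rule order.trans[OF norm_sum]) (simp add: norm_mult psi_abscor_def)
  also have "\<dots> = (\<Sum>b\<in>undecided_sites. ?A b * cmod (x b))"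
  proof (rule sum.mono_neutral_right[OF _ undecided_sites_subset])
    show "\<forall>b\<in>Free - undecided_sites. ?A b * cmod (x b) = 0"
    proof
      fix b assume b: "b \<in> Free - undecided_sites"
      then have "fst b \<in> decided"
        using Free_not_decided_in_undecided_sites by auto
      then show "?A b * cmod (x b) = 0"
        using b eigenvector_decided by simp
    qed
  qed simp
  also have "\<dots> \<le> (\<Sum>(i', j')\<in>undecided_sites. (block_corr i i' * share i' j'
            + (if i = i' then (if j = j' then 1 else 0) + share i' j' else 0)) * cmod (x (i', j')))"
    using psi_abscor_\<nu>_le[OF a] by (intro sum_mono) (auto intro: mult_right_mono)
  also have "\<dots> = mat_apply undecided block_corr (block_mass x) i + cmod (x (i, j)) + block_mass x i"
    unfolding block_mass_def[abs_def] by (rule sum_undecided_sites_row_bound[OF a])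
  finally show ?thesis .
qed

lemma block_mass_subinvariant:
  assumes i: "i \<in> undecided"
  shows "(cmod c - 2) * block_mass x i \<le> mat_apply undecided block_corr (block_mass x) i"
proof -
  let ?M = "mat_apply undecided block_corr (block_mass x) i"
  have "cmod c * block_mass x i = (\<Sum>j\<in>unpinned i. share i j * (cmod c * cmod (x (i, j))))"
    unfolding block_mass_def by (simp add: sum_distrib_left ac_simps)
  also have "\<dots> \<le> (\<Sum>j\<in>unpinned i. share i j * (?M + cmod (x (i, j)) + block_mass x i))"
    using eigenvector_row_bound share_pos[OF i] i
    by (intro sum_mono mult_left_mono) (auto simp: undecided_sites_iff less_imp_le)
  also have "\<dots> = ?M + 2 * block_mass x i"
    using sum_share[OF i]
    by (simp add: distrib_left sum.distrib sum_distrib_right[symmetric] block_mass_def[symmetric])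
  finally show ?thesis
    by (simp add: algebra_simps)
qed

end

lemma eigenvalue_\<nu>_le:
  assumes "is_eigenvalue Free (psi_abscor Free \<nu>) c"
  shows "cmod c \<le> spec_radius undecided block_corr + 2"
proof (cases "cmod c \<le> 2")
  case False
  from assms obtain x where nz: "\<exists>a\<in>Free. x a \<noteq> 0"
    and eigen: "\<And>a. a \<in> Free \<Longrightarrow> (\<Sum>b\<in>Free. complex_of_real (psi_abscor Free \<nu> a b) * x b) = c * x a"
    unfolding is_eigenvalue_def by blast
  have c: "c \<noteq> 1"
    using False by auto
  obtain i j where "(i, j) \<in> Free" and x: "x (i, j) \<noteq> 0"
    using nz by auto
  then have ij: "(i, j) \<in> undecided_sites"
    using eigenvector_decided[OF eigen c] Free_not_decided_in_undecided_sites by fastforce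
  then have i: "i \<in> undecided"
    unfolding undecided_sites_iff by simp
  have "0 < share i j * cmod (x (i, j))"
    using ij x share_pos unfolding undecided_sites_iff by simp
  also have "\<dots> \<le> block_mass x i"
    unfolding block_mass_def using ij share_pos[OF i]
    by (intro member_le_sum) (auto simp: undecided_sites_iff unpinned_def less_imp_le)
  finally have "cmod c - 2 \<le> spec_radius undecided block_corr"
    using block_mass_subinvariant[OF eigen c] i False
    by (intro spec_radius_ge_subinvariant) (auto simp: block_corr_def psi_abscor_def)
  then show ?thesis
    by simp
qed (use spec_radius_nonneg[of undecided block_corr] in simp)

end

theorem lemma6p10:
  fixes \<eta> \<epsilon> :: real and n k :: nat and \<mu> :: "(nat \<Rightarrow> int) \<Rightarrow> real"
  assumes "\<eta> > 0" and "\<epsilon> > 0"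
    and "is_dist {1..n} \<mu>"
    and "complete_limited_corr {1..n} \<mu> \<eta> \<epsilon>"
    and "k \<ge> 1"
  shows "complete_limited_corr ({1..n} \<times> {1..k}) (Rd {1..n} k \<mu>) (\<eta> + 2) \<epsilon>"
  unfolding complete_limited_corr_def limited_corr_def
proof (intro allI impI ballI)
  fix lam :: "nat \<times> nat \<Rightarrow> real" and \<Lambda> \<tau>
  assume lam: "\<forall>a\<in>{1..n} \<times> {1..k}. 0 < lam a \<and> lam a \<le> 1 + \<epsilon>"
    and "\<Lambda> \<subseteq> {1..n} \<times> {1..k}"
    and "\<tau> \<in> support_marg ({1..n} \<times> {1..k}) (tilt ({1..n} \<times> {1..k}) lam (Rd {1..n} k \<mu>)) \<Lambda>"
  then interpret Rd_pinning "{1..n}" k \<mu> lam \<Lambda> \<tau>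
    using assms(3,5) by unfold_locales (auto simp: is_dist_def)
  have "\<forall>i\<in>{1..n}. 0 < block_field i \<and> block_field i \<le> 1 + \<epsilon>"
    using block_field_pos block_field_le[of \<epsilon>] lam assms(2) by auto
  then have "spec_radius undecided block_corr \<le> \<eta>"
    using assms(4) decided_subset block_pin_support
    unfolding complete_limited_corr_def limited_corr_def block_corr_def \<mu>'_def by blast
  then show "spec_radius ({1..n} \<times> {1..k} - \<Lambda>) (psi_abscor ({1..n} \<times> {1..k} - \<Lambda>)
      (cond ({1..n} \<times> {1..k}) (tilt ({1..n} \<times> {1..k}) lam (Rd {1..n} k \<mu>)) \<Lambda> \<tau>)) \<le> \<eta> + 2"
    unfolding \<nu>_def[symmetric] using eigenvalue_\<nu>_le assms(1)
    by (intro spec_radius_le) force+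
qed

end
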